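(* Let $B_1,B_2\in\mathbb{B}_n$ be rational boxes in $\mathbb{R}^n$. Then $B_1\uplus B_2\neq B_1\cup B_2$ if and only if (1) there exists $i\in\{1,\dots,n\}$ such that $\pi_i(B_1)\oplus\pi_i(B_2)\neq\pi_i(B_1)\cup\pi_i(B_2)$; or (2) there exist $i,j\in\{1,\dots,n\}$ with $i\neq j$ such that $\pi_i(B_1)\not\subseteq\pi_i(B_2)$ and $\pi_j(B_2)\not\subseteq\pi_j(B_1)$.
   Context: A rational interval constraint on dimension $i$ is a constraint $x_i\bowtie b$ with $\bowtie\in\{<,\le,=,\ge,>\}$ and $b\in\mathbb{Q}$. A rational box is the set of points of $\mathbb{R}^n$ satisfying a finite system of rational interval constraints; $\mathbb{B}_n$ is the set of all rational boxes (including $\emptyset$). Equivalently, a non-empty rational box is a Cartesian product of $n$ non-empty, possibly unbounded, real intervals with rational, possibly open endpoints. Let $\mathbb{I}$ be the set of such intervals together with $\emptyset$, and for $I_1,I_2\in\mathbb{I}$ let $I_1\oplus I_2$ be the smallest element of $\mathbb{I}$ (w.r.t. inclusion) containing $I_1\cup I_2$. For $S\subseteq\mathbb{R}^n$, $\pi_i(S)=\{v_i : \mathbf{v}\in S\}$. $B_1\uplus B_2$ is the smallest rational box containing $B_1\cup B_2$; for non-empty boxes it equals $(\pi_1(B_1)\oplus\pi_1(B_2))\times\cdots\times(\pi_n(B_1)\oplus\pi_n(B_2))$. *)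

theory Defs
  imports "HOL-Analysis.Analysis"
begin

datatype cmp_rel = CLt | CLe | CEq | CGe | CGt

fun sat_rel :: "cmp_rel \<Rightarrow> real \<Rightarrow> real \<Rightarrow> bool" where
  "sat_rel CLt x b = (x < b)"
| "sat_rel CLe x b = (x \<le> b)"
| "sat_rel CEq x b = (x = b)"
| "sat_rel CGe x b = (x \<ge> b)"
| "sat_rel CGt x b = (x > b)"

definition rational_box :: "(real^'n) set \<Rightarrow> bool" where
  "rational_box B \<longleftrightarrow> (\<exists>C :: ('n \<times> cmp_rel \<times> real) set.
     finite C \<and> (\<forall>(i, r, b)\<in>C. b \<in> \<rat>) \<and>
     B = {x. \<forall>(i, r, b)\<in>C. sat_rel r (x $ i) b})"

text \<open>Elements of the set I: non-empty, possibly unbounded real intervals with rational,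
  possibly open endpoints, together with the empty set; equivalently the solution sets of
  finite systems of rational interval constraints on one real variable.\<close>
definition rational_interval :: "real set \<Rightarrow> bool" where
  "rational_interval I \<longleftrightarrow> (\<exists>C :: (cmp_rel \<times> real) set.
     finite C \<and> (\<forall>(r, b)\<in>C. b \<in> \<rat>) \<and>
     I = {x. \<forall>(r, b)\<in>C. sat_rel r x b})"

definition interval_join :: "real set \<Rightarrow> real set \<Rightarrow> real set" where
  "interval_join I1 I2 = (LEAST I. rational_interval I \<and> I1 \<union> I2 \<subseteq> I)"

definition box_join :: "(real^'n) set \<Rightarrow> (real^'n) set \<Rightarrow> (real^'n) set" where
  "box_join B1 B2 = (LEAST B. rational_box B \<and> B1 \<union> B2 \<subseteq> B)"

definition proj :: "'n \<Rightarrow> (real^'n) set \<Rightarrow> real set" where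
  "proj i S = (\<lambda>v. v $ i) ` S"

end

theory Submission
  imports Defs
begin

text \<open>A nonempty rational box is the product of its projections, and the smallest rational
  box containing two nonempty boxes is the product of the coordinatewise joins. These joins
  exist because the smallest rational interval containing a finite union of rational
  intervals is cut out by the finitely many constraints whose bounds are endpoints of the
  given intervals: every Sup or Inf of such a union is one of these endpoints.
  Hence the join of the boxes is their union iff each coordinatewise join is the plain union
  and the product of the unions is the union of the products; the latter fails exactly when
  one coordinate can be taken from the first box only and a different one from the second
  box only.\<close>

section \<open>Rational interval hulls in one dimension\<close>

definition rational_interval_hull :: "real set \<Rightarrow> real set" where
  "rational_interval_hull S =
     {x. \<forall>r b. b \<in> \<rat> \<and> (\<forall>s\<in>S. sat_rel r s b) \<longrightarrow> sat_rel r x b}"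

lemma rational_interval_hull_subset: "S \<subseteq> rational_interval_hull S"
  unfolding rational_interval_hull_def by auto

lemma rational_interval_hull_least:
  "rational_interval I \<Longrightarrow> S \<subseteq> I \<Longrightarrow> rational_interval_hull S \<subseteq> I"
  unfolding rational_interval_def rational_interval_hull_def by fastforce

lemma rational_interval_hull_eq: "rational_interval I \<Longrightarrow> rational_interval_hull I = I"
  using rational_interval_hull_least rational_interval_hull_subset by blast

lemma sat_rel_between:
  "sat_rel r s1 b \<Longrightarrow> sat_rel r s2 b \<Longrightarrow> s1 \<le> x \<Longrightarrow> x \<le> s2 \<Longrightarrow> sat_rel r x b"
  by (cases r) auto

lemma sat_rel_sgn_cong: "sgn (x - b) = sgn (y - b) \<Longrightarrow> sat_rel r x b \<longleftrightarrow> sat_rel r y b"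
  by (cases r) (auto simp: sgn_if split: if_splits)

text \<open>The cells of a finite set \<open>D\<close> of reals are its points and the open intervals
  between consecutive points; a set defined by constraints with bounds in \<open>D\<close> is a union
  of cells.\<close>

definition same_cell :: "real set \<Rightarrow> real \<Rightarrow> real \<Rightarrow> bool" where
  "same_cell D x y \<longleftrightarrow> (\<forall>d\<in>D. sgn (x - d) = sgn (y - d))"

definition union_of_cells :: "real set \<Rightarrow> real set \<Rightarrow> bool" where
  "union_of_cells D S \<longleftrightarrow> (\<forall>x\<in>S. \<forall>y. same_cell D x y \<longrightarrow> y \<in> S)"

lemma union_of_cells_constraints:
  assumes "snd ` C \<subseteq> D"
  shows "union_of_cells D {x. \<forall>(r, b)\<in>C. sat_rel r x b}"
  unfolding union_of_cells_def
proof (intro ballI allI impI)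
  fix x y assume "x \<in> {x. \<forall>(r, b)\<in>C. sat_rel r x b}" "same_cell D x y"
  then have "sat_rel r y b" if "(r, b) \<in> C" for r b
    using that assms sat_rel_sgn_cong[of x b y r] unfolding same_cell_def by force
  then show "y \<in> {x. \<forall>(r, b)\<in>C. sat_rel r x b}" by auto
qed

lemma union_of_cells_mono: "union_of_cells D S \<Longrightarrow> D \<subseteq> D' \<Longrightarrow> union_of_cells D' S"
  unfolding union_of_cells_def same_cell_def by blast

lemma union_of_cells_Un:
  "union_of_cells D S \<Longrightarrow> union_of_cells D T \<Longrightarrow> union_of_cells D (S \<union> T)"
  unfolding union_of_cells_def by blast

lemma rational_interval_union_of_cells:
  assumes "rational_interval I"
  obtains D where "finite D" "D \<subseteq> \<rat>" "union_of_cells D I"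
proof -
  obtain C where "finite C" "\<forall>(r, b)\<in>C. b \<in> \<rat>" "I = {x. \<forall>(r, b)\<in>C. sat_rel r x b}"
    using assms unfolding rational_interval_def by blast
  moreover have "snd ` C \<subseteq> \<rat>" using \<open>\<forall>(r, b)\<in>C. b \<in> \<rat>\<close> by auto
  ultimately show ?thesis
    using that[of "snd ` C"] union_of_cells_constraints[of C "snd ` C"] by simp
qed

lemma frontier_subset_cells:
  assumes "finite D" "union_of_cells D S"
  shows "frontier S \<subseteq> D"
proof
  fix m assume m: "m \<in> frontier S"
  show "m \<in> D"
  proof (rule ccontr)
    assume "m \<notin> D"
    obtain \<delta> where "\<delta> > 0" and \<delta>: "\<forall>d\<in>D. d \<noteq> m \<longrightarrow> \<delta> \<le> dist m d"
      using finite_set_avoid[OF assms(1)] by blast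
    have near: "sgn (y - d) = sgn (m - d)" if "dist m y < \<delta>" "d \<in> D" for y d
    proof -
      have "\<delta> \<le> \<bar>m - d\<bar>" using \<delta> \<open>m \<notin> D\<close> \<open>d \<in> D\<close> by (metis dist_real_def)
      then show ?thesis using \<open>dist m y < \<delta>\<close> by (auto simp: dist_real_def sgn_if)
    qed
    obtain x y where "x \<in> S" "dist m x < \<delta>" "y \<notin> S" "dist m y < \<delta>"
      using m \<open>\<delta> > 0\<close> unfolding frontier_straddle by blast
    then have "same_cell D x y"
      using near unfolding same_cell_def by simp
    then show False
      using assms(2) \<open>x \<in> S\<close> \<open>y \<notin> S\<close> by (simp add: union_of_cells_def)
  qed
qed

lemma cSup_in_frontier:
  fixes S :: "real set"
  assumes "S \<noteq> {}" "bdd_above S"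
  shows "Sup S \<in> frontier S"
  unfolding frontier_straddle
proof (intro allI impI conjI)
  fix e :: real assume "e > 0"
  obtain s where "s \<in> S" "Sup S - e < s"
    using less_cSupD[OF assms(1), of "Sup S - e"] \<open>e > 0\<close> by auto
  then show "\<exists>x\<in>S. dist (Sup S) x < e"
    using cSup_upper[OF _ assms(2)] by (force simp: dist_real_def)
  have "Sup S + e/2 \<notin> S"
    using cSup_upper[OF _ assms(2)] \<open>e > 0\<close> by force
  then show "\<exists>x. x \<notin> S \<and> dist (Sup S) x < e"
    using \<open>e > 0\<close> by (intro exI[of _ "Sup S + e/2"]) (auto simp: dist_real_def)
qed

lemma cInf_in_frontier:
  fixes S :: "real set"
  assumes "S \<noteq> {}" "bdd_below S"
  shows "Inf S \<in> frontier S"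
  unfolding frontier_straddle
proof (intro allI impI conjI)
  fix e :: real assume "e > 0"
  obtain s where "s \<in> S" "s < Inf S + e"
    using cInf_lessD[OF assms(1), of "Inf S + e"] \<open>e > 0\<close> by auto
  then show "\<exists>x\<in>S. dist (Inf S) x < e"
    using cInf_lower[OF _ assms(2)] by (force simp: dist_real_def)
  have "Inf S - e/2 \<notin> S"
    using cInf_lower[OF _ assms(2)] \<open>e > 0\<close> by force
  then show "\<exists>x. x \<notin> S \<and> dist (Inf S) x < e"
    using \<open>e > 0\<close> by (intro exI[of _ "Inf S - e/2"]) (auto simp: dist_real_def)
qed

text \<open>If all of \<open>S\<close> lay below \<open>x\<close>, then \<open>Sup S \<in> D\<close>, and the constraint
  \<open>\<le> Sup S\<close> or \<open>< Sup S\<close> (whichever holds on \<open>S\<close>) would exclude \<open>x\<close>.\<close>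

lemma exists_ge_if_cell_constraints:
  assumes "finite D" "union_of_cells D S" "S \<noteq> {}"
    and x: "\<And>r d. d \<in> D \<Longrightarrow> \<forall>s\<in>S. sat_rel r s d \<Longrightarrow> sat_rel r x d"
  shows "\<exists>s\<in>S. x \<le> s"
proof (rule ccontr)
  assume "\<not> ?thesis"
  then have below: "\<forall>s\<in>S. s < x" by auto
  then have bdd: "bdd_above S" unfolding bdd_above_def using less_imp_le by blast
  let ?m = "Sup S"
  have "?m \<in> D" using cSup_in_frontier[OF assms(3) bdd] frontier_subset_cells assms by blast
  have ub: "\<forall>s\<in>S. s \<le> ?m" using cSup_upper[OF _ bdd] by blast
  have "?m \<le> x" using below assms(3) by (intro cSup_least) auto
  show False
  proof (cases "?m \<in> S")
    case True
    have "\<forall>s\<in>S. sat_rel CLe s ?m" using ub by simp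
    then have "sat_rel CLe x ?m" by (rule x[OF \<open>?m \<in> D\<close>])
    then show False using below True by fastforce
  next
    case False
    then have "\<forall>s\<in>S. sat_rel CLt s ?m" using ub by (metis order_le_less sat_rel.simps(1))
    then have "sat_rel CLt x ?m" by (rule x[OF \<open>?m \<in> D\<close>])
    then show False using \<open>?m \<le> x\<close> by simp
  qed
qed

lemma exists_le_if_cell_constraints:
  assumes "finite D" "union_of_cells D S" "S \<noteq> {}"
    and x: "\<And>r d. d \<in> D \<Longrightarrow> \<forall>s\<in>S. sat_rel r s d \<Longrightarrow> sat_rel r x d"
  shows "\<exists>s\<in>S. s \<le> x"
proof (rule ccontr)
  assume "\<not> ?thesis"
  then have above: "\<forall>s\<in>S. x < s" by auto
  then have bdd: "bdd_below S" unfolding bdd_below_def using less_imp_le by blast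
  let ?m = "Inf S"
  have "?m \<in> D" using cInf_in_frontier[OF assms(3) bdd] frontier_subset_cells assms by blast
  have lb: "\<forall>s\<in>S. ?m \<le> s" using cInf_lower[OF _ bdd] by blast
  have "x \<le> ?m" using above assms(3) by (intro cInf_greatest) auto
  show False
  proof (cases "?m \<in> S")
    case True
    have "\<forall>s\<in>S. sat_rel CGe s ?m" using lb by simp
    then have "sat_rel CGe x ?m" by (rule x[OF \<open>?m \<in> D\<close>])
    then show False using above True by fastforce
  next
    case False
    then have "\<forall>s\<in>S. sat_rel CGt s ?m" using lb by (metis order_le_less sat_rel.simps(5))
    then have "sat_rel CGt x ?m" by (rule x[OF \<open>?m \<in> D\<close>])
    then show False using \<open>x \<le> ?m\<close> by simp
  qed
qed

text \<open>Only finitely many constraints matter: the hull is cut out by the constraints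
  with bounds in \<open>D\<close>, because any point satisfying those lies between two points of
  \<open>S\<close>. The bound \<open>0\<close> is added so that the empty set is cut out as well.\<close>

lemma rational_interval_hull_union_of_cells:
  assumes "finite D" "D \<subseteq> \<rat>" "union_of_cells D S"
  shows "rational_interval (rational_interval_hull S)"
proof -
  define D' where "D' = insert 0 D"
  define C where "C = {(r, d). d \<in> D' \<and> (\<forall>s\<in>S. sat_rel r s d)}"
  have "finite D'" "D' \<subseteq> \<rat>" "union_of_cells D' S"
    using assms union_of_cells_mono[of D S D'] unfolding D'_def by auto
  have "C \<subseteq> UNIV \<times> D'" unfolding C_def by auto
  moreover have "finite (UNIV :: cmp_rel set)"
  proof -
    have "UNIV = {CLt, CLe, CEq, CGe, CGt}" using cmp_rel.exhaust by auto
    then show ?thesis by (metis finite.emptyI finite.insertI)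
  qed
  ultimately have "finite C" using \<open>finite D'\<close> by (meson finite_SigmaI finite_subset)
  have "rational_interval_hull S = {x. \<forall>(r, d)\<in>C. sat_rel r x d}"
  proof (intro equalityI subsetI)
    fix x assume "x \<in> rational_interval_hull S"
    then show "x \<in> {x. \<forall>(r, d)\<in>C. sat_rel r x d}"
      using \<open>D' \<subseteq> \<rat>\<close> unfolding rational_interval_hull_def C_def by auto
  next
    fix x assume "x \<in> {x. \<forall>(r, d)\<in>C. sat_rel r x d}"
    then have x: "\<And>r d. d \<in> D' \<Longrightarrow> \<forall>s\<in>S. sat_rel r s d \<Longrightarrow> sat_rel r x d"
      unfolding C_def by auto
    show "x \<in> rational_interval_hull S"
    proof (cases "S = {}")
      case True
      then show ?thesis using x[of 0 CLt] x[of 0 CGt] unfolding D'_def by auto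
    next
      case False
      obtain s1 s2 where "s1 \<in> S" "s2 \<in> S" "s1 \<le> x" "x \<le> s2"
        using exists_ge_if_cell_constraints[OF \<open>finite D'\<close> \<open>union_of_cells D' S\<close> False x]
          exists_le_if_cell_constraints[OF \<open>finite D'\<close> \<open>union_of_cells D' S\<close> False x] by blast
      then show ?thesis
        unfolding rational_interval_hull_def by (blast intro: sat_rel_between)
    qed
  qed
  moreover have "\<forall>(r, d)\<in>C. d \<in> \<rat>" using \<open>D' \<subseteq> \<rat>\<close> unfolding C_def by auto
  ultimately show ?thesis
    unfolding rational_interval_def using \<open>finite C\<close> by (intro exI[of _ C]) simp
qed

lemma rational_interval_hull_Un:
  assumes "rational_interval I1" "rational_interval I2"
  shows "rational_interval (rational_interval_hull (I1 \<union> I2))"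
proof -
  obtain D1 D2 where "finite D1" "D1 \<subseteq> \<rat>" "union_of_cells D1 I1"
    "finite D2" "D2 \<subseteq> \<rat>" "union_of_cells D2 I2"
    using assms by (meson rational_interval_union_of_cells)
  moreover from this have "union_of_cells (D1 \<union> D2) (I1 \<union> I2)"
    using union_of_cells_mono[of D1 I1 "D1 \<union> D2"] union_of_cells_mono[of D2 I2 "D1 \<union> D2"]
    by (simp add: union_of_cells_Un)
  ultimately show ?thesis
    by (intro rational_interval_hull_union_of_cells[of "D1 \<union> D2"]) auto
qed

lemma interval_join_eq_hull:
  assumes "rational_interval I1" "rational_interval I2"
  shows "interval_join I1 I2 = rational_interval_hull (I1 \<union> I2)"
  unfolding interval_join_def
proof (rule Least_equality)
  show "rational_interval (rational_interval_hull (I1 \<union> I2))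
      \<and> I1 \<union> I2 \<subseteq> rational_interval_hull (I1 \<union> I2)"
    using assms rational_interval_hull_Un rational_interval_hull_subset by blast
  show "rational_interval_hull (I1 \<union> I2) \<le> K" if "rational_interval K \<and> I1 \<union> I2 \<subseteq> K" for K
    using that by (simp add: rational_interval_hull_least)
qed

section \<open>Boxes as products of intervals\<close>

definition vec_product :: "('n \<Rightarrow> 'a set) \<Rightarrow> ('a^'n) set" where
  "vec_product S = {x. \<forall>i. x $ i \<in> S i}"

lemma mem_vec_product [simp]: "x \<in> vec_product S \<longleftrightarrow> (\<forall>i. x $ i \<in> S i)"
  by (simp add: vec_product_def)

lemma vec_product_eq_empty_iff: "vec_product S = {} \<longleftrightarrow> (\<exists>i. S i = {})"
proof
  assume "vec_product S = {}"
  then have "(\<chi> i. SOME s. s \<in> S i) \<notin> vec_product S" by blast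
  then show "\<exists>i. S i = {}" by (simp add: some_in_eq)
qed (metis empty_iff equals0I mem_vec_product)

lemma proj_vec_product:
  assumes "\<forall>j. S j \<noteq> {}"
  shows "proj i (vec_product S) = S i"
proof
  show "proj i (vec_product S) \<subseteq> S i" unfolding proj_def by auto
  show "S i \<subseteq> proj i (vec_product S)"
  proof
    fix t assume "t \<in> S i"
    then have "(\<chi> j. if j = i then t else SOME s. s \<in> S j) \<in> vec_product S"
      using assms by (simp add: some_in_eq)
    then show "t \<in> proj i (vec_product S)"
      unfolding proj_def by (rule image_eqI[rotated]) simp
  qed
qed

lemma rational_interval_empty: "rational_interval {}"
  unfolding rational_interval_def by (rule exI[of _ "{(CLt, 0), (CGt, 0)}"]) auto

lemma rational_box_vec_product:
  assumes "\<forall>i. rational_interval (S i)"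
  shows "rational_box (vec_product S :: (real^'n) set)"
proof -
  have "\<forall>i. \<exists>Ci. finite Ci \<and> (\<forall>(r, b)\<in>Ci. b \<in> \<rat>) \<and> S i = {x. \<forall>(r, b)\<in>Ci. sat_rel r x b}"
    using assms unfolding rational_interval_def by blast
  then obtain C where C: "\<forall>i. finite (C i) \<and> (\<forall>(r, b)\<in>C i. b \<in> \<rat>)
      \<and> S i = {x. \<forall>(r, b)\<in>C i. sat_rel r x b}"
    by (rule choice[THEN exE])
  define CC where "CC = (\<Union>i. (\<lambda>(r, b). (i, r, b)) ` C i)"
  have "finite CC" unfolding CC_def using C by auto
  moreover have "\<forall>(i, r, b)\<in>CC. b \<in> \<rat>" unfolding CC_def using C by fastforce
  moreover have "vec_product S = {x :: real^'n. \<forall>(i, r, b)\<in>CC. sat_rel r (x $ i) b}"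
    unfolding CC_def vec_product_def using C by fastforce
  ultimately show ?thesis unfolding rational_box_def by (intro exI[of _ CC] conjI)
qed

lemma rational_box_obtain_vec_product:
  assumes "rational_box (B :: (real^'n) set)"
  obtains S where "\<forall>i. rational_interval (S i)" "B = vec_product S"
proof -
  obtain C :: "('n \<times> cmp_rel \<times> real) set" where C: "finite C" "\<forall>(i, r, b)\<in>C. b \<in> \<rat>"
     "B = {x. \<forall>(i, r, b)\<in>C. sat_rel r (x $ i) b}"
    using assms unfolding rational_box_def by blast
  define C' where "C' i = (\<lambda>(j, r, b). (r, b)) ` {c\<in>C. fst c = i}" for i
  have "rational_interval {t. \<forall>(r, b)\<in>C' i. sat_rel r t b}" for i
    unfolding rational_interval_def using C(1,2)
    by (intro exI[of _ "C' i"] conjI) (auto simp: C'_def)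
  moreover have "B = vec_product (\<lambda>i. {t. \<forall>(r, b)\<in>C' i. sat_rel r t b})"
    unfolding C(3) C'_def vec_product_def by fastforce
  ultimately show ?thesis using that[of "\<lambda>i. {t. \<forall>(r, b)\<in>C' i. sat_rel r t b}"] by blast
qed

lemma rational_interval_proj:
  assumes "rational_box (B :: (real^'n) set)"
  shows "rational_interval (proj i B)"
proof -
  obtain S where S: "\<forall>i. rational_interval (S i)" "B = vec_product S"
    using rational_box_obtain_vec_product[OF assms] by blast
  show ?thesis
  proof (cases "\<forall>j. S j \<noteq> {}")
    case True
    then have "proj i B = S i" using S(2) proj_vec_product by simp
    then show ?thesis using S(1) by simp
  next
    case False
    then have "B = {}" using S(2) vec_product_eq_empty_iff by blast
    then show ?thesis using rational_interval_empty by (simp add: proj_def)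
  qed
qed

lemma rational_box_eq_vec_product_proj:
  assumes "rational_box (B :: (real^'n) set)" "B \<noteq> {}"
  shows "vec_product (\<lambda>i. proj i B) = B"
proof -
  obtain S where S: "B = vec_product S"
    using rational_box_obtain_vec_product[OF assms(1)] by blast
  then have "\<forall>j. S j \<noteq> {}" using assms(2) vec_product_eq_empty_iff by blast
  then show ?thesis using S proj_vec_product[OF \<open>\<forall>j. S j \<noteq> {}\<close>] by simp
qed

lemma interval_join_empty:
  assumes "rational_interval I"
  shows "interval_join {} I = I" "interval_join I {} = I"
  by (simp_all add: interval_join_eq_hull rational_interval_empty rational_interval_hull_eq assms)

lemma box_join_empty:
  assumes "rational_box B"
  shows "box_join {} B = B" "box_join B {} = B"
  unfolding box_join_def by (rule Least_equality; simp add: assms)+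

lemma box_join_eq_vec_product:
  fixes B1 B2 :: "(real^'n) set"
  assumes "rational_box B1" "rational_box B2" "B1 \<noteq> {}" "B2 \<noteq> {}"
  shows "box_join B1 B2 = vec_product (\<lambda>i. interval_join (proj i B1) (proj i B2))"
  unfolding box_join_def
proof (rule Least_equality)
  let ?J = "\<lambda>i. interval_join (proj i B1) (proj i B2)"
  have J: "?J i = rational_interval_hull (proj i B1 \<union> proj i B2)" for i
    by (simp add: interval_join_eq_hull rational_interval_proj assms(1,2))
  have "rational_box (vec_product ?J)"
    unfolding J
    by (intro rational_box_vec_product allI rational_interval_hull_Un rational_interval_proj assms(1,2))
  moreover have "x $ i \<in> ?J i" if "x \<in> B1 \<union> B2" for x i
  proof -
    have "x $ i \<in> proj i B1 \<union> proj i B2" using that unfolding proj_def by blast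
    then show ?thesis unfolding J using rational_interval_hull_subset by blast
  qed
  ultimately show "rational_box (vec_product ?J) \<and> B1 \<union> B2 \<subseteq> vec_product ?J"
    by auto
  fix K :: "(real^'n) set" assume K: "rational_box K \<and> B1 \<union> B2 \<subseteq> K"
  have "proj i B1 \<union> proj i B2 \<subseteq> proj i K" for i
    using K unfolding proj_def by blast
  then have "?J i \<subseteq> proj i K" for i
    unfolding J using rational_interval_hull_least rational_interval_proj K by blast
  then have "vec_product ?J \<subseteq> vec_product (\<lambda>i. proj i K)"
    unfolding vec_product_def by blast
  also have "\<dots> = K"
    using K assms(3) by (intro rational_box_eq_vec_product_proj) auto
  finally show "vec_product ?J \<subseteq> K" .
qed

section \<open>Unions of products\<close>

lemma vec_product_Un_eq_iff:
  fixes S1 S2 :: "'n::finite \<Rightarrow> 'a set"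
  assumes "\<forall>i. S1 i \<noteq> {}"
  shows "vec_product (\<lambda>i. S1 i \<union> S2 i) = vec_product S1 \<union> vec_product S2
    \<longleftrightarrow> (\<forall>i j. i \<noteq> j \<longrightarrow> S1 i \<subseteq> S2 i \<or> S2 j \<subseteq> S1 j)"
proof
  assume eq: "vec_product (\<lambda>i. S1 i \<union> S2 i) = vec_product S1 \<union> vec_product S2"
  show "\<forall>i j. i \<noteq> j \<longrightarrow> S1 i \<subseteq> S2 i \<or> S2 j \<subseteq> S1 j"
  proof (intro allI impI, rule ccontr)
    fix i j assume "i \<noteq> j" "\<not> (S1 i \<subseteq> S2 i \<or> S2 j \<subseteq> S1 j)"
    then obtain a b where a: "a \<in> S1 i" "a \<notin> S2 i" and b: "b \<in> S2 j" "b \<notin> S1 j" by blast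
    define x :: "'a^'n" where "x = (\<chi> k. if k = i then a else if k = j then b else SOME s. s \<in> S1 k)"
    have "x $ k \<in> S1 k \<union> S2 k" for k
      using a(1) b(1) assms some_in_eq[of "S1 k"] unfolding x_def by auto
    then have "x \<in> vec_product S1 \<union> vec_product S2"
      unfolding eq[symmetric] by simp
    moreover have "x $ i = a" "x $ j = b" using \<open>i \<noteq> j\<close> unfolding x_def by auto
    ultimately show False using a(2) b(2) by auto
  qed
next
  assume split: "\<forall>i j. i \<noteq> j \<longrightarrow> S1 i \<subseteq> S2 i \<or> S2 j \<subseteq> S1 j"
  have "x \<in> vec_product S1 \<union> vec_product S2" if x: "\<forall>k. x $ k \<in> S1 k \<union> S2 k" for x
  proof (rule ccontr)
    assume "x \<notin> vec_product S1 \<union> vec_product S2"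
    then obtain i j where i: "x $ i \<notin> S1 i" and j: "x $ j \<notin> S2 j" by auto
    then have "i \<noteq> j" "x $ i \<in> S2 i" "x $ j \<in> S1 j" using x by blast+
    then show False using split[rule_format, of j i] i j by blast
  qed
  then show "vec_product (\<lambda>i. S1 i \<union> S2 i) = vec_product S1 \<union> vec_product S2"
    unfolding vec_product_def by blast
qed

text \<open>Coordinatewise joins are recovered from the product because all factors are nonempty.\<close>

lemma vec_product_eq_Un_iff:
  fixes S1 S2 J :: "'n::finite \<Rightarrow> real set"
  assumes "\<forall>i. S1 i \<noteq> {}" "\<forall>i. S1 i \<union> S2 i \<subseteq> J i"
  shows "vec_product J = vec_product S1 \<union> vec_product S2
    \<longleftrightarrow> (\<forall>i. J i = S1 i \<union> S2 i) \<and> (\<forall>i j. i \<noteq> j \<longrightarrow> S1 i \<subseteq> S2 i \<or> S2 j \<subseteq> S1 j)"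
proof
  assume eq: "vec_product J = vec_product S1 \<union> vec_product S2"
  have "vec_product J \<subseteq> vec_product (\<lambda>i. S1 i \<union> S2 i)"
    unfolding eq by auto
  moreover have "vec_product (\<lambda>i. S1 i \<union> S2 i) \<subseteq> vec_product J"
    using assms(2) unfolding vec_product_def by blast
  ultimately have Un: "vec_product J = vec_product (\<lambda>i. S1 i \<union> S2 i)"
    by (rule antisym)
  have "J i = S1 i \<union> S2 i" for i
  proof -
    have "J i = proj i (vec_product J)"
      by (rule proj_vec_product[symmetric]) (use assms in blast)
    also have "\<dots> = S1 i \<union> S2 i"
      unfolding Un by (rule proj_vec_product) (use assms in blast)
    finally show ?thesis .
  qed
  moreover have "\<forall>i j. i \<noteq> j \<longrightarrow> S1 i \<subseteq> S2 i \<or> S2 j \<subseteq> S1 j"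
    using vec_product_Un_eq_iff[OF assms(1)] eq Un by simp
  ultimately show "(\<forall>i. J i = S1 i \<union> S2 i) \<and> (\<forall>i j. i \<noteq> j \<longrightarrow> S1 i \<subseteq> S2 i \<or> S2 j \<subseteq> S1 j)"
    by blast
next
  assume "(\<forall>i. J i = S1 i \<union> S2 i) \<and> (\<forall>i j. i \<noteq> j \<longrightarrow> S1 i \<subseteq> S2 i \<or> S2 j \<subseteq> S1 j)"
  then have "J = (\<lambda>i. S1 i \<union> S2 i)" "\<forall>i j. i \<noteq> j \<longrightarrow> S1 i \<subseteq> S2 i \<or> S2 j \<subseteq> S1 j"
    by auto
  then show "vec_product J = vec_product S1 \<union> vec_product S2"
    using vec_product_Un_eq_iff[OF assms(1)] by simp
qed

theorem theorem5:
  fixes B1 B2 :: "(real^'n) set"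
  assumes "rational_box B1" and "rational_box B2"
  shows "box_join B1 B2 \<noteq> B1 \<union> B2 \<longleftrightarrow>
    ((\<exists>i. interval_join (proj i B1) (proj i B2) \<noteq> proj i B1 \<union> proj i B2) \<or>
     (\<exists>i j. i \<noteq> j \<and> \<not> proj i B1 \<subseteq> proj i B2 \<and> \<not> proj j B2 \<subseteq> proj j B1))"
proof (cases "B1 = {} \<or> B2 = {}")
  case True
  have proj_empty: "proj i ({} :: (real^'n) set) = {}" for i by (simp add: proj_def)
  from True show ?thesis
    by (elim disjE)
      (simp_all add: proj_empty box_join_empty interval_join_empty rational_interval_proj assms)
next
  case False
  let ?J = "\<lambda>i. interval_join (proj i B1) (proj i B2)"
  have "vec_product (\<lambda>i. proj i B1) = B1" "vec_product (\<lambda>i. proj i B2) = B2"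
    using False by (intro rational_box_eq_vec_product_proj assms; auto)+
  moreover have "box_join B1 B2 = vec_product ?J"
    using False by (intro box_join_eq_vec_product assms) auto
  ultimately have "box_join B1 B2 = B1 \<union> B2 \<longleftrightarrow>
      vec_product ?J = vec_product (\<lambda>i. proj i B1) \<union> vec_product (\<lambda>i. proj i B2)"
    by simp
  also have "\<dots> \<longleftrightarrow> (\<forall>i. ?J i = proj i B1 \<union> proj i B2)
      \<and> (\<forall>i j. i \<noteq> j \<longrightarrow> proj i B1 \<subseteq> proj i B2 \<or> proj j B2 \<subseteq> proj j B1)"
  proof (rule vec_product_eq_Un_iff)
    show "\<forall>i. proj i B1 \<noteq> {}" using False by (simp add: proj_def)
    show "\<forall>i. proj i B1 \<union> proj i B2 \<subseteq> ?J i"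
      using assms by (simp add: interval_join_eq_hull rational_interval_proj rational_interval_hull_subset)
  qed
  finally show ?thesis by (simp only: not_all not_imp de_Morgan_disj de_Morgan_conj)
qed

end
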